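(* (a) Let $\mathbf{x}=(x_s)\in(\mathbb{C}^* )^{\mathbb{Z}^3}$ be a coherent solution of the Kashaev equation such that $x_vx_{v+e_i+e_j}+x_{v+e_i}x_{v+e_j}\neq0$ for all $v\in\mathbb{Z}^3$ and all distinct $i,j\in\{1,2,3\}$ (where $e_1,e_2,e_3$ are the standard basis vectors). Then $\mathbf{x}$ can be extended to an array $\tilde{\mathbf{x}}=(x_s)\in\mathbb{C}^L$ satisfying the K-hexahedron equations. (b) Conversely, if $\tilde{\mathbf{x}}=(x_s)\in\mathbb{C}^L$, with $x_s\neq0$ for all $s\in\mathbb{Z}^3$, satisfies the K-hexahedron equations, then the restriction of $\tilde{\mathbf{x}}$ to $\mathbb{Z}^3$ is a coherent solution of the Kashaev equation.
   Context: For a unit cube $C$ in $\mathbb{Z}^3$ and $\mathbf{x}\in\mathbb{C}^{\mathbb{Z}^3}$, label the values at the vertices of $C$ as $z_{ijk}$ ($i,j,k\in\{0,1\}$) via a cube isomorphism $C\cong\{0,1\}^3$; put $a=z_{000}z_{111}$, $b=z_{100}z_{011}$, $c=z_{010}z_{101}$, $d=z_{001}z_{110}$, $s=z_{000}z_{011}z_{101}z_{110}$, $t=z_{111}z_{100}z_{010}z_{001}$ and $K^C(\mathbf{x})=2(a^2+b^2+c^2+d^2)-(a+b+c+d)^2-4(s+t)$. For a vertex $v$ of $C$, choosing the labeling with $z_{000}=x_v$, set $K^C_v(\mathbf{x})=\tfrac12\big(z_{111}z_{000}^2-z_{000}(z_{100}z_{011}+z_{010}z_{101}+z_{001}z_{110})\big)-z_{100}z_{010}z_{001}$.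 An array $\mathbf{x}\in\mathbb{C}^{\mathbb{Z}^3}$ is a coherent solution of the Kashaev equation if $K^C(\mathbf{x})=0$ for every unit cube $C$ and, for every $v\in\mathbb{Z}^3$, $\prod_{C\ni v}K^C_v(\mathbf{x})=\prod_{S\ni v}(x_vx_{v_2}+x_{v_1}x_{v_3})$, the first product over the $8$ unit cubes containing $v$, the second over the $12$ unit squares $S$ containing $v$, with $v,v_1,v_2,v_3$ the vertices of $S$ in cyclic order. $L=\{(i,j,k)\in\mathbb{R}^3: 2i,2j,2k,i+j+k\in\mathbb{Z}\}=\mathbb{Z}^3+\{(0,0,0),(0,\tfrac12,\tfrac12),(\tfrac12,0,\tfrac12),(\tfrac12,\tfrac12,0)\}$, i.e. $\mathbb{Z}^3$ together with the centers of unit squares. An array $\tilde{\mathbf{x}}=(x_s)\in\mathbb{C}^L$ with $x_s\ne0$ for $s\in\mathbb{Z}^3$ satisfies the K-hexahedron equations if (i) for every $s\in L\setminus\mathbb{Z}^3$, $x_s^2=x_{v_1}x_{v_3}+x_{v_2}x_{v_4}$, where $v_1,v_2,v_3,v_4$ are the vertices, in cyclic order, of the unit square centered at $s$; and (ii) for every $v\in\mathbb{Z}^3$, writing $z_{ijk}=x_{v+(i,j,k)}$, $z_{1\frac12\frac12}=(z_{\frac120\frac12}z_{\frac12\frac120}+z_{0\frac12\frac12}z_{100})/z_{000}$, $z_{\frac121\frac12}=(z_{0\frac12\frac12}z_{\frac12\frac120}+z_{\frac120\frac12}z_{010})/z_{000}$, $z_{\frac12\frac121}=(z_{0\frac12\frac12}z_{\frac120\frac12}+z_{\frac12\frac120}z_{001})/z_{000}$,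 $z_{111}=(A+2z_{0\frac12\frac12}z_{\frac120\frac12}z_{\frac12\frac120})/z_{000}^2$, where $A=2z_{100}z_{010}z_{001}+z_{000}(z_{100}z_{011}+z_{010}z_{101}+z_{001}z_{110})$. *)

theory Defs
  imports Complex_Main
begin

type_synonym pt = "int \<times> int \<times> int"

definition shift :: "pt \<Rightarrow> pt \<Rightarrow> pt" where
  "shift v d = (fst v + fst d, fst (snd v) + fst (snd d), snd (snd v) + snd (snd d))"

definition e :: "nat \<Rightarrow> pt" where
  "e i = (if i = 1 then (1,0,0) else if i = 2 then (0,1,0) else (0,0,1))"

definition Kcube :: "(pt \<Rightarrow> complex) \<Rightarrow> pt \<Rightarrow> complex" where
  "Kcube x w =
    (let z = (\<lambda>i j k. x (shift w (i,j,k)));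
         a = z 0 0 0 * z 1 1 1; b = z 1 0 0 * z 0 1 1;
         c = z 0 1 0 * z 1 0 1; d = z 0 0 1 * z 1 1 0;
         s = z 0 0 0 * z 0 1 1 * z 1 0 1 * z 1 1 0;
         t = z 1 1 1 * z 1 0 0 * z 0 1 0 * z 0 0 1
     in 2 * (a^2 + b^2 + c^2 + d^2) - (a + b + c + d)^2 - 4 * (s + t))"

(* K^C_v for the unit cube C = {v + (s1 i, s2 j, s3 k) : i,j,k \<in> {0,1}} containing v,
   labeled with z_000 = x_v *)
definition Kvert :: "(pt \<Rightarrow> complex) \<Rightarrow> pt \<Rightarrow> pt \<Rightarrow> complex" where
  "Kvert x v \<sigma> =
    (let z = (\<lambda>i j k. x (shift v (fst \<sigma> * i, fst (snd \<sigma>) * j, snd (snd \<sigma>) * k)))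
     in (1/2) * (z 1 1 1 * (z 0 0 0)^2
                 - z 0 0 0 * (z 1 0 0 * z 0 1 1 + z 0 1 0 * z 1 0 1 + z 0 0 1 * z 1 1 0))
        - z 1 0 0 * z 0 1 0 * z 0 0 1)"

(* sign vectors: the 8 unit cubes containing a vertex *)
definition signs :: "pt set" where
  "signs = {-1,1} \<times> {-1,1} \<times> {-1,1}"

(* the 12 unit squares containing a vertex v: vertices v, v+d1, v+d1+d2, v+d2 (cyclic) *)
definition sq_dirs :: "(pt \<times> pt) set" where
  "sq_dirs =
     (\<lambda>(s,t). ((s,0,0),(0,t,0))) ` ({-1,1} \<times> {-1,1})
   \<union> (\<lambda>(s,t). ((s,0,0),(0,0,t))) ` ({-1,1} \<times> {-1,1})
   \<union> (\<lambda>(s,t). ((0,s,0),(0,0,t))) ` ({-1,1} \<times> {-1,1})"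

definition coherent :: "(pt \<Rightarrow> complex) \<Rightarrow> bool" where
  "coherent x \<longleftrightarrow>
     (\<forall>w. Kcube x w = 0) \<and>
     (\<forall>v. (\<Prod>\<sigma>\<in>signs. Kvert x v \<sigma>) =
          (\<Prod>d\<in>sq_dirs. x v * x (shift (shift v (fst d)) (snd d))
                          + x (shift v (fst d)) * x (shift v (snd d))))"

(* The lattice L is encoded in doubled coordinates: the point (i,j,k) \<in> L is stored
   as (2i,2j,2k) \<in> Z^3, so L corresponds to triples with even coordinate sum and
   Z^3 \<subseteq> L to triples with all coordinates even.  dbl v is the image of v \<in> Z^3. *)
definition dbl :: "pt \<Rightarrow> pt" where
  "dbl v = (2 * fst v, 2 * fst (snd v), 2 * snd (snd v))"

definition K_hexahedron :: "(pt \<Rightarrow> complex) \<Rightarrow> bool" where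
  "K_hexahedron xt \<longleftrightarrow>
     (\<forall>v. xt (dbl v) \<noteq> 0) \<and>
     \<comment> \<open>(i) face centers: exactly one doubled coordinate is even\<close>
     (\<forall>a b c. even a \<and> odd b \<and> odd c \<longrightarrow>
        (xt (a,b,c))^2 = xt (a,b-1,c-1) * xt (a,b+1,c+1) + xt (a,b+1,c-1) * xt (a,b-1,c+1)) \<and>
     (\<forall>a b c. odd a \<and> even b \<and> odd c \<longrightarrow>
        (xt (a,b,c))^2 = xt (a-1,b,c-1) * xt (a+1,b,c+1) + xt (a+1,b,c-1) * xt (a-1,b,c+1)) \<and>
     (\<forall>a b c. odd a \<and> odd b \<and> even c \<longrightarrow>
        (xt (a,b,c))^2 = xt (a-1,b-1,c) * xt (a+1,b+1,c) + xt (a+1,b-1,c) * xt (a-1,b+1,c)) \<and>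
     \<comment> \<open>(ii) with z p q r = x_{v + (p/2, q/2, r/2)}\<close>
     (\<forall>v. let z = (\<lambda>p q r. xt (shift (dbl v) (p,q,r)));
              A = 2 * z 2 0 0 * z 0 2 0 * z 0 0 2
                  + z 0 0 0 * (z 2 0 0 * z 0 2 2 + z 0 2 0 * z 2 0 2 + z 0 0 2 * z 2 2 0)
          in z 2 1 1 = (z 1 0 1 * z 1 1 0 + z 0 1 1 * z 2 0 0) / z 0 0 0 \<and>
             z 1 2 1 = (z 0 1 1 * z 1 1 0 + z 1 0 1 * z 0 2 0) / z 0 0 0 \<and>
             z 1 1 2 = (z 0 1 1 * z 1 0 1 + z 1 1 0 * z 0 0 2) / z 0 0 0 \<and>
             z 2 2 2 = (A + 2 * z 0 1 1 * z 1 0 1 * z 1 1 0) / (z 0 0 0)^2)"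

end

theory Submission
  imports Defs
begin

(* The face-centre values of a K-hexahedron solution are square roots of the face polynomials
   x_v x_v2 + x_v1 x_v3, and on each unit cube the K-hexahedron equations make K^C_w, for every
   vertex w of the cube, plus or minus the product of the three face values at w.  Since
   4 ((K^C_v)^2 - product of the three face polynomials at v) = x_v^2 K^C, this gives K^C = 0, and
   the product of the eight K^C_v around v becomes the product of the twelve squared face values
   around v, which is coherence: this is (b).

   For (a) the square roots have to be chosen consistently.  On each line in direction e_1
   (resp. e_2) the x-recurrence (resp. y-recurrence) fixes the face values up to one sign, the
   z-face values are then forced by X Y Z = K_v, and the z-recurrence holds up to a sign q(a,b,c)
   per cube.  Coherence at a vertex says that q multiplies to 1 over every 2x2 block of cubes in a
   layer, so q(a,b,c) = q(a,0,c) q(0,b,c) q(0,0,c), and flipping the x- and y-face values layer by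
   layer by cumulative products of these factors removes q. *)

section \<open>The algebra of a single cube\<close>

definition kvert_poly :: "'a::field \<Rightarrow> 'a \<Rightarrow> 'a \<Rightarrow> 'a \<Rightarrow> 'a \<Rightarrow> 'a \<Rightarrow> 'a \<Rightarrow> 'a \<Rightarrow> 'a" where
  "kvert_poly z000 z100 z010 z001 z011 z101 z110 z111 =
     (z111 * z000^2 - z000 * (z100 * z011 + z010 * z101 + z001 * z110)) / 2 - z100 * z010 * z001"

definition kcube_poly :: "'a::comm_ring_1 \<Rightarrow> 'a \<Rightarrow> 'a \<Rightarrow> 'a \<Rightarrow> 'a \<Rightarrow> 'a \<Rightarrow> 'a \<Rightarrow> 'a \<Rightarrow> 'a" where
  "kcube_poly z000 z100 z010 z001 z011 z101 z110 z111 =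
     (let a = z000 * z111; b = z100 * z011; c = z010 * z101; d = z001 * z110
      in 2 * (a^2 + b^2 + c^2 + d^2) - (a + b + c + d)^2
         - 4 * (z000 * z011 * z101 * z110 + z111 * z100 * z010 * z001))"

lemma kcube_poly_discriminant:
  fixes z000 :: "'a::field_char_0"
  shows "4 * (kvert_poly z000 z100 z010 z001 z011 z101 z110 z111 ^ 2
              - (z000*z011 + z010*z001) * (z000*z101 + z100*z001) * (z000*z110 + z100*z010))
         = z000^2 * kcube_poly z000 z100 z010 z001 z011 z101 z110 z111"
  unfolding kvert_poly_def kcube_poly_def Let_def by (simp add: field_simps) algebra

lemma kvert_poly_double:
  fixes z000 :: "'a::field_char_0"
  shows "2 * kvert_poly z000 z100 z010 z001 z011 z101 z110 z111
         = z111 * z000^2 - z000 * (z100 * z011 + z010 * z101 + z001 * z110) - 2 * z100 * z010 * z001"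
  by (simp add: kvert_poly_def field_simps)

lemma kvert_poly_eq_iff:
  fixes z000 :: "'a::field_char_0"
  assumes "z000 \<noteq> 0"
  shows "z111 = (2*z100*z010*z001 + z000*(z100*z011 + z010*z101 + z001*z110) + 2*f) / z000^2
         \<longleftrightarrow> f = kvert_poly z000 z100 z010 z001 z011 z101 z110 z111"
  using assms unfolding kvert_poly_def by (auto simp: field_simps)

(* f_i are the values at the centres of the three faces through the corner z000 and g_i those at
   the opposite faces, linked by the K-hexahedron recurrences; the equation for z111 is encoded as
   f1 f2 f3 = K_v, cf. kvert_poly_eq_iff. *)
context
  fixes z000 z100 z010 z001 z011 z101 z110 z111 f1 f2 f3 g1 g2 g3 :: "'a::field_char_0"
  assumes nz: "z000 \<noteq> 0"
    and f1: "f1^2 = z000*z011 + z010*z001"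
    and f2: "f2^2 = z000*z101 + z100*z001"
    and f3: "f3^2 = z000*z110 + z100*z010"
    and kvert: "f1*f2*f3 = kvert_poly z000 z100 z010 z001 z011 z101 z110 z111"
    and g1: "g1 * z000 = f2*f3 + f1*z100"
    and g2: "g2 * z000 = f1*f3 + f2*z010"
    and g3: "g3 * z000 = f1*f2 + f3*z001"
begin

lemma cube_solved_form:
  "z011 = (f1^2 - z010*z001)/z000" "z101 = (f2^2 - z100*z001)/z000"
  "z110 = (f3^2 - z100*z010)/z000"
  "g1 = (f2*f3 + f1*z100)/z000" "g2 = (f1*f3 + f2*z010)/z000" "g3 = (f1*f2 + f3*z001)/z000"
  "z111 = (2*z100*z010*z001 + z000*(z100*z011 + z010*z101 + z001*z110) + 2*f1*f2*f3)/z000^2"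
  using nz f1 f2 f3 g1 g2 g3 kvert_poly_eq_iff[OF nz, of z111 z100 z010 z001 z011 z101 z110 "f1*f2*f3"] kvert
  by (simp_all add: field_simps)

lemma cube_far_faces:
  "g1^2 = z100*z111 + z110*z101"
  "g2^2 = z010*z111 + z110*z011"
  "g3^2 = z001*z111 + z101*z011"
  unfolding cube_solved_form using nz
  by (simp_all add: divide_simps) (simp_all add: algebra_simps power2_eq_square power3_eq_cube)

lemma cube_kvert_values:
  "kvert_poly z001 z101 z011 z000 z010 z100 z111 z110 = - f1 * f2 * g3"
  "kvert_poly z010 z110 z000 z011 z001 z111 z100 z101 = - f1 * g2 * f3"
  "kvert_poly z011 z111 z001 z010 z000 z110 z101 z100 = - f1 * g2 * g3"
  "kvert_poly z100 z000 z110 z101 z111 z001 z010 z011 = - g1 * f2 * f3"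
  "kvert_poly z101 z001 z111 z100 z110 z000 z011 z010 = - g1 * f2 * g3"
  "kvert_poly z110 z010 z100 z111 z101 z011 z000 z001 = - g1 * g2 * f3"
  unfolding kvert_poly_def cube_solved_form using nz
  by (simp_all add: divide_simps) (simp_all add: algebra_simps power2_eq_square power3_eq_cube)

lemma cube_kvert_opposite: "kvert_poly z111 z011 z101 z110 z100 z010 z001 z000 = g1 * g2 * g3"
proof -
  have "2 * kvert_poly z111 z011 z101 z110 z100 z010 z001 z000 = 2 * (g1 * g2 * g3)"
    using nz f1 f2 f3 kvert[THEN arg_cong[where f="\<lambda>t. 2 * t"]] g1 g2 g3
    unfolding kvert_poly_double by algebra
  then show ?thesis by simp
qed

end

section \<open>Face polynomials and the K-hexahedron system on the integer lattice\<close>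

fun face_x :: "(pt \<Rightarrow> complex) \<Rightarrow> pt \<Rightarrow> complex" where
  "face_x x (a,b,c) = x(a,b,c) * x(a,b+1,c+1) + x(a,b+1,c) * x(a,b,c+1)"

fun face_y :: "(pt \<Rightarrow> complex) \<Rightarrow> pt \<Rightarrow> complex" where
  "face_y x (a,b,c) = x(a,b,c) * x(a+1,b,c+1) + x(a+1,b,c) * x(a,b,c+1)"

fun face_z :: "(pt \<Rightarrow> complex) \<Rightarrow> pt \<Rightarrow> complex" where
  "face_z x (a,b,c) = x(a,b,c) * x(a+1,b+1,c) + x(a+1,b,c) * x(a,b+1,c)"

fun kvert_min :: "(pt \<Rightarrow> complex) \<Rightarrow> pt \<Rightarrow> complex" where
  "kvert_min x (a,b,c) = kvert_poly (x(a,b,c)) (x(a+1,b,c)) (x(a,b+1,c)) (x(a,b,c+1))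
     (x(a,b+1,c+1)) (x(a+1,b,c+1)) (x(a+1,b+1,c)) (x(a+1,b+1,c+1))"

lemma face_x_shift: "face_x x v =
    x v * x (shift (shift v (e 2)) (e 3)) + x (shift v (e 2)) * x (shift v (e 3))"
  by (cases v) (simp add: e_def shift_def)

lemma face_y_shift: "face_y x v =
    x v * x (shift (shift v (e 1)) (e 3)) + x (shift v (e 1)) * x (shift v (e 3))"
  by (cases v) (simp add: e_def shift_def)

lemma face_z_shift: "face_z x v =
    x v * x (shift (shift v (e 1)) (e 2)) + x (shift v (e 1)) * x (shift v (e 2))"
  by (cases v) (simp add: e_def shift_def)

lemma Kvert_eq_kvert_poly:
  "Kvert x (a,b,c) (p,q,r) = kvert_poly (x(a,b,c)) (x(a+p,b,c)) (x(a,b+q,c)) (x(a,b,c+r))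
     (x(a,b+q,c+r)) (x(a+p,b,c+r)) (x(a+p,b+q,c)) (x(a+p,b+q,c+r))"
  by (simp add: Kvert_def kvert_poly_def shift_def Let_def)

lemma Kcube_eq_kcube_poly:
  "Kcube x (a,b,c) = kcube_poly (x(a,b,c)) (x(a+1,b,c)) (x(a,b+1,c)) (x(a,b,c+1))
     (x(a,b+1,c+1)) (x(a+1,b,c+1)) (x(a+1,b+1,c)) (x(a+1,b+1,c+1))"
  by (simp add: Kcube_def kcube_poly_def shift_def Let_def)

lemma Kcube_eq_0_iff:
  assumes "x(a,b,c) \<noteq> 0"
  shows "Kcube x (a,b,c) = 0 \<longleftrightarrow>
         kvert_min x (a,b,c)^2 = face_x x (a,b,c) * face_y x (a,b,c) * face_z x (a,b,c)"
proof -
  have "4 * (kvert_min x (a,b,c)^2 - face_x x (a,b,c) * face_y x (a,b,c) * face_z x (a,b,c))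
        = x(a,b,c)^2 * Kcube x (a,b,c)"
    unfolding Kcube_eq_kcube_poly face_x.simps face_y.simps face_z.simps kvert_min.simps
    by (rule kcube_poly_discriminant)
  then show ?thesis
    using assms by (metis mult_eq_0_iff power_not_zero right_minus_eq zero_neq_numeral)
qed

lemma cube_Kvert_values:
  fixes x :: "pt \<Rightarrow> complex"
  assumes nz: "x(a,b,c) \<noteq> 0"
    and "f1^2 = face_x x (a,b,c)" "f2^2 = face_y x (a,b,c)" "f3^2 = face_z x (a,b,c)"
    and "f1*f2*f3 = kvert_min x (a,b,c)"
    and "g1 * x(a,b,c) = f2*f3 + f1*x(a+1,b,c)"
    and "g2 * x(a,b,c) = f1*f3 + f2*x(a,b+1,c)"
    and "g3 * x(a,b,c) = f1*f2 + f3*x(a,b,c+1)"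
  shows "Kvert x (a,b,c) (1,1,1) = f1 * f2 * f3"
    and "Kvert x (a,b,c+1) (1,1,-1) = - f1 * f2 * g3"
    and "Kvert x (a,b+1,c) (1,-1,1) = - f1 * g2 * f3"
    and "Kvert x (a,b+1,c+1) (1,-1,-1) = - f1 * g2 * g3"
    and "Kvert x (a+1,b,c) (-1,1,1) = - g1 * f2 * f3"
    and "Kvert x (a+1,b,c+1) (-1,1,-1) = - g1 * f2 * g3"
    and "Kvert x (a+1,b+1,c) (-1,-1,1) = - g1 * g2 * f3"
    and "Kvert x (a+1,b+1,c+1) (-1,-1,-1) = g1 * g2 * g3"
    and "g1^2 = face_x x (a+1,b,c)"
    and "g2^2 = face_y x (a,b+1,c)"
    and "g3^2 = face_z x (a,b,c+1)"
proof -
  have hyps: "f1^2 = x(a,b,c) * x(a,b+1,c+1) + x(a,b+1,c) * x(a,b,c+1)"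
    "f2^2 = x(a,b,c) * x(a+1,b,c+1) + x(a+1,b,c) * x(a,b,c+1)"
    "f3^2 = x(a,b,c) * x(a+1,b+1,c) + x(a+1,b,c) * x(a,b+1,c)"
    "f1*f2*f3 = kvert_poly (x(a,b,c)) (x(a+1,b,c)) (x(a,b+1,c)) (x(a,b,c+1))
       (x(a,b+1,c+1)) (x(a+1,b,c+1)) (x(a+1,b+1,c)) (x(a+1,b+1,c+1))"
    using assms by simp_all
  note cube = cube_kvert_values[OF nz hyps assms(6-8)] cube_kvert_opposite[OF nz hyps assms(6-8)]
    cube_far_faces[OF nz hyps assms(6-8)]
  show "Kvert x (a,b,c) (1,1,1) = f1 * f2 * f3"
    using assms(5) by (simp add: Kvert_eq_kvert_poly)
  show "Kvert x (a,b,c+1) (1,1,-1) = - f1 * f2 * g3"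
    and "Kvert x (a,b+1,c) (1,-1,1) = - f1 * g2 * f3"
    and "Kvert x (a,b+1,c+1) (1,-1,-1) = - f1 * g2 * g3"
    and "Kvert x (a+1,b,c) (-1,1,1) = - g1 * f2 * f3"
    and "Kvert x (a+1,b,c+1) (-1,1,-1) = - g1 * f2 * g3"
    and "Kvert x (a+1,b+1,c) (-1,-1,1) = - g1 * g2 * f3"
    and "Kvert x (a+1,b+1,c+1) (-1,-1,-1) = g1 * g2 * g3"
    and "g1^2 = face_x x (a+1,b,c)"
    and "g2^2 = face_y x (a,b+1,c)"
    and "g3^2 = face_z x (a,b,c+1)"
    using cube by (simp_all add: Kvert_eq_kvert_poly algebra_simps)
qed

lemma signs_eq:
  "signs = {(1,1,1),(1,1,-1),(1,-1,1),(1,-1,-1),(-1,1,1),(-1,1,-1),(-1,-1,1),(-1,-1,-1)}"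
  by (auto simp: signs_def)

lemma sq_dirs_eq:
  "sq_dirs = {((1,0,0),(0,1,0)), ((1,0,0),(0,-1,0)), ((-1,0,0),(0,1,0)), ((-1,0,0),(0,-1,0)),
     ((1,0,0),(0,0,1)), ((1,0,0),(0,0,-1)), ((-1,0,0),(0,0,1)), ((-1,0,0),(0,0,-1)),
     ((0,1,0),(0,0,1)), ((0,1,0),(0,0,-1)), ((0,-1,0),(0,0,1)), ((0,-1,0),(0,0,-1))}"
  by (auto simp: sq_dirs_def)

lemma face_product_around_vertex:
  "(\<Prod>d\<in>sq_dirs. x (a,b,c) * x (shift (shift (a,b,c) (fst d)) (snd d))
                    + x (shift (a,b,c) (fst d)) * x (shift (a,b,c) (snd d)))
   = (face_x x (a,b,c) * face_x x (a,b,c-1) * face_x x (a,b-1,c) * face_x x (a,b-1,c-1)) *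
     (face_y x (a,b,c) * face_y x (a,b,c-1) * face_y x (a-1,b,c) * face_y x (a-1,b,c-1)) *
     (face_z x (a,b,c) * face_z x (a,b-1,c) * face_z x (a-1,b,c) * face_z x (a-1,b-1,c))"
proof -
  have faces:
    "x (a,b,c) * x (a+1,b+1,c) + x (a+1,b,c) * x (a,b+1,c) = face_z x (a,b,c)"
    "x (a,b,c) * x (a+1,b-1,c) + x (a+1,b,c) * x (a,b-1,c) = face_z x (a,b-1,c)"
    "x (a,b,c) * x (a-1,b+1,c) + x (a-1,b,c) * x (a,b+1,c) = face_z x (a-1,b,c)"
    "x (a,b,c) * x (a-1,b-1,c) + x (a-1,b,c) * x (a,b-1,c) = face_z x (a-1,b-1,c)"
    "x (a,b,c) * x (a+1,b,c+1) + x (a+1,b,c) * x (a,b,c+1) = face_y x (a,b,c)"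
    "x (a,b,c) * x (a+1,b,c-1) + x (a+1,b,c) * x (a,b,c-1) = face_y x (a,b,c-1)"
    "x (a,b,c) * x (a-1,b,c+1) + x (a-1,b,c) * x (a,b,c+1) = face_y x (a-1,b,c)"
    "x (a,b,c) * x (a-1,b,c-1) + x (a-1,b,c) * x (a,b,c-1) = face_y x (a-1,b,c-1)"
    "x (a,b,c) * x (a,b+1,c+1) + x (a,b+1,c) * x (a,b,c+1) = face_x x (a,b,c)"
    "x (a,b,c) * x (a,b+1,c-1) + x (a,b+1,c) * x (a,b,c-1) = face_x x (a,b,c-1)"
    "x (a,b,c) * x (a,b-1,c+1) + x (a,b-1,c) * x (a,b,c+1) = face_x x (a,b-1,c)"
    "x (a,b,c) * x (a,b-1,c-1) + x (a,b-1,c) * x (a,b,c-1) = face_x x (a,b-1,c-1)"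
    by (simp_all add: algebra_simps)
  show ?thesis
    unfolding sq_dirs_eq by (simp add: shift_def faces del: face_x.simps face_y.simps face_z.simps)
qed

(* Zup is the value the z-recurrence of the cube below assigns to its top face; it need not agree
   with Z there. *)
lemma Kvert_product_around_vertex:
  fixes x X Y Z Zup :: "pt \<Rightarrow> complex"
  assumes nz: "\<And>v. x v \<noteq> 0"
    and X: "\<And>v. X v ^ 2 = face_x x v" and Y: "\<And>v. Y v ^ 2 = face_y x v"
    and Z: "\<And>v. Z v ^ 2 = face_z x v"
    and XYZ: "\<And>v. X v * Y v * Z v = kvert_min x v"
    and X_rec: "\<And>a b c. X(a+1,b,c) * x(a,b,c) = Y(a,b,c) * Z(a,b,c) + X(a,b,c) * x(a+1,b,c)"
    and Y_rec: "\<And>a b c. Y(a,b+1,c) * x(a,b,c) = X(a,b,c) * Z(a,b,c) + Y(a,b,c) * x(a,b+1,c)"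
    and Zup: "\<And>a b c. Zup(a,b,c) * x(a,b,c) = X(a,b,c) * Y(a,b,c) + Z(a,b,c) * x(a,b,c+1)"
  shows "(\<Prod>\<sigma>\<in>signs. Kvert x (a,b,c) \<sigma>) =
    (Z(a,b,c) * Z(a,b-1,c) * Z(a-1,b,c) * Z(a-1,b-1,c)) *
    (Zup(a,b,c-1) * Zup(a,b-1,c-1) * Zup(a-1,b,c-1) * Zup(a-1,b-1,c-1)) *
    (Y(a,b,c) * Y(a,b,c-1) * Y(a-1,b,c) * Y(a-1,b,c-1))^2 *
    (X(a,b,c) * X(a,b,c-1) * X(a,b-1,c) * X(a,b-1,c-1))^2"
proof -
  note cube = cube_Kvert_values[OF nz X Y Z XYZ X_rec Y_rec Zup]
  have "Kvert x (a,b,c) (1,1,1) = X(a,b,c) * Y(a,b,c) * Z(a,b,c)"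
    and "Kvert x (a,b,c) (1,1,-1) = - X(a,b,c-1) * Y(a,b,c-1) * Zup(a,b,c-1)"
    and "Kvert x (a,b,c) (1,-1,1) = - X(a,b-1,c) * Y(a,b,c) * Z(a,b-1,c)"
    and "Kvert x (a,b,c) (1,-1,-1) = - X(a,b-1,c-1) * Y(a,b,c-1) * Zup(a,b-1,c-1)"
    and "Kvert x (a,b,c) (-1,1,1) = - X(a,b,c) * Y(a-1,b,c) * Z(a-1,b,c)"
    and "Kvert x (a,b,c) (-1,1,-1) = - X(a,b,c-1) * Y(a-1,b,c-1) * Zup(a-1,b,c-1)"
    and "Kvert x (a,b,c) (-1,-1,1) = - X(a,b-1,c) * Y(a-1,b,c) * Z(a-1,b-1,c)"
    and "Kvert x (a,b,c) (-1,-1,-1) = X(a,b-1,c-1) * Y(a-1,b,c-1) * Zup(a-1,b-1,c-1)"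
    using cube(1)[of a b c] cube(2)[of a b "c-1"] cube(3)[of a "b-1" c] cube(4)[of a "b-1" "c-1"]
      cube(5)[of "a-1" b c] cube(6)[of "a-1" b "c-1"] cube(7)[of "a-1" "b-1" c]
      cube(8)[of "a-1" "b-1" "c-1"]
    by simp_all
  then show ?thesis by (simp add: signs_eq power2_eq_square mult_ac)
qed

(* The K-hexahedron system in undoubled coordinates: X, Y, Z are the values at the centres of the
   unit squares orthogonal to e_1, e_2, e_3, indexed by their minimal corner, and the equation for
   z_111 is stated as X Y Z = K_v, cf. kvert_poly_eq_iff. *)
definition hexahedral_faces ::
  "(pt \<Rightarrow> complex) \<Rightarrow> (pt \<Rightarrow> complex) \<Rightarrow> (pt \<Rightarrow> complex) \<Rightarrow> (pt \<Rightarrow> complex) \<Rightarrow> bool" where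
  "hexahedral_faces x X Y Z \<longleftrightarrow>
     (\<forall>v. X v ^ 2 = face_x x v \<and> Y v ^ 2 = face_y x v \<and> Z v ^ 2 = face_z x v \<and>
          X v * Y v * Z v = kvert_min x v) \<and>
     (\<forall>a b c. X(a+1,b,c) * x(a,b,c) = Y(a,b,c) * Z(a,b,c) + X(a,b,c) * x(a+1,b,c) \<and>
              Y(a,b+1,c) * x(a,b,c) = X(a,b,c) * Z(a,b,c) + Y(a,b,c) * x(a,b+1,c) \<and>
              Z(a,b,c+1) * x(a,b,c) = X(a,b,c) * Y(a,b,c) + Z(a,b,c) * x(a,b,c+1))"

lemma hexahedral_facesD:
  assumes "hexahedral_faces x X Y Z"
  shows "X v ^ 2 = face_x x v" and "Y v ^ 2 = face_y x v" and "Z v ^ 2 = face_z x v"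
    and "X v * Y v * Z v = kvert_min x v"
    and "X(a+1,b,c) * x(a,b,c) = Y(a,b,c) * Z(a,b,c) + X(a,b,c) * x(a+1,b,c)"
    and "Y(a,b+1,c) * x(a,b,c) = X(a,b,c) * Z(a,b,c) + Y(a,b,c) * x(a,b+1,c)"
    and "Z(a,b,c+1) * x(a,b,c) = X(a,b,c) * Y(a,b,c) + Z(a,b,c) * x(a,b,c+1)"
  using assms unfolding hexahedral_faces_def by blast+

lemma hexahedral_facesI:
  assumes "\<And>a b c. X(a,b,c) ^ 2 = face_x x (a,b,c)" and "\<And>a b c. Y(a,b,c) ^ 2 = face_y x (a,b,c)"
    and "\<And>a b c. Z(a,b,c) ^ 2 = face_z x (a,b,c)"
    and "\<And>a b c. X(a,b,c) * Y(a,b,c) * Z(a,b,c) = kvert_min x (a,b,c)"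
    and "\<And>a b c. X(a+1,b,c) * x(a,b,c) = Y(a,b,c) * Z(a,b,c) + X(a,b,c) * x(a+1,b,c)"
    and "\<And>a b c. Y(a,b+1,c) * x(a,b,c) = X(a,b,c) * Z(a,b,c) + Y(a,b,c) * x(a,b+1,c)"
    and "\<And>a b c. Z(a,b,c+1) * x(a,b,c) = X(a,b,c) * Y(a,b,c) + Z(a,b,c) * x(a,b,c+1)"
  shows "hexahedral_faces x X Y Z"
  unfolding hexahedral_faces_def split_paired_All by (intro conjI allI assms)

lemma hexahedral_faces_coherent:
  assumes nz: "\<And>v. x v \<noteq> 0" and faces: "hexahedral_faces x X Y Z"
  shows "coherent x"
proof -
  note X = hexahedral_facesD(1)[OF faces] and Y = hexahedral_facesD(2)[OF faces]
    and Z = hexahedral_facesD(3)[OF faces] and XYZ = hexahedral_facesD(4)[OF faces]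
    and X_rec = hexahedral_facesD(5)[OF faces] and Y_rec = hexahedral_facesD(6)[OF faces]
    and Z_rec = hexahedral_facesD(7)[OF faces]
  have "Kcube x (a,b,c) = 0" for a b c
  proof -
    have "kvert_min x (a,b,c)^2 = face_x x (a,b,c) * face_y x (a,b,c) * face_z x (a,b,c)"
      unfolding XYZ[symmetric] X[symmetric] Y[symmetric] Z[symmetric] by algebra
    then show ?thesis using Kcube_eq_0_iff nz by blast
  qed
  moreover have "(\<Prod>\<sigma>\<in>signs. Kvert x (a,b,c) \<sigma>) =
      (\<Prod>d\<in>sq_dirs. x (a,b,c) * x (shift (shift (a,b,c) (fst d)) (snd d))
                    + x (shift (a,b,c) (fst d)) * x (shift (a,b,c) (snd d)))" for a b c
  proof -
    have Z_up: "(\<lambda>(a,b,c). Z(a,b,c+1)) (a,b,c) * x(a,b,c) = X(a,b,c) * Y(a,b,c) + Z(a,b,c) * x(a,b,c+1)"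
      for a b c using Z_rec by simp
    show ?thesis
      using Kvert_product_around_vertex[OF nz X Y Z XYZ X_rec Y_rec Z_up, of a b c]
      unfolding face_product_around_vertex X[symmetric] Y[symmetric] Z[symmetric]
      by (simp add: power2_eq_square mult_ac)
  qed
  ultimately show ?thesis unfolding coherent_def split_paired_All by blast
qed

lemma K_hexahedronD:
  assumes "K_hexahedron xt"
  shows "xt (2*a, 2*b, 2*c) \<noteq> 0"
    and "xt (2*a, 2*b+1, 2*c+1)^2
           = xt (2*a, 2*b, 2*c) * xt (2*a, 2*b+2, 2*c+2) + xt (2*a, 2*b+2, 2*c) * xt (2*a, 2*b, 2*c+2)"
    and "xt (2*a+1, 2*b, 2*c+1)^2
           = xt (2*a, 2*b, 2*c) * xt (2*a+2, 2*b, 2*c+2) + xt (2*a+2, 2*b, 2*c) * xt (2*a, 2*b, 2*c+2)"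
    and "xt (2*a+1, 2*b+1, 2*c)^2
           = xt (2*a, 2*b, 2*c) * xt (2*a+2, 2*b+2, 2*c) + xt (2*a+2, 2*b, 2*c) * xt (2*a, 2*b+2, 2*c)"
    and "xt (2*a+2, 2*b+1, 2*c+1) = (xt (2*a+1, 2*b, 2*c+1) * xt (2*a+1, 2*b+1, 2*c)
           + xt (2*a, 2*b+1, 2*c+1) * xt (2*a+2, 2*b, 2*c)) / xt (2*a, 2*b, 2*c)"
    and "xt (2*a+1, 2*b+2, 2*c+1) = (xt (2*a, 2*b+1, 2*c+1) * xt (2*a+1, 2*b+1, 2*c)
           + xt (2*a+1, 2*b, 2*c+1) * xt (2*a, 2*b+2, 2*c)) / xt (2*a, 2*b, 2*c)"
    and "xt (2*a+1, 2*b+1, 2*c+2) = (xt (2*a, 2*b+1, 2*c+1) * xt (2*a+1, 2*b, 2*c+1)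
           + xt (2*a+1, 2*b+1, 2*c) * xt (2*a, 2*b, 2*c+2)) / xt (2*a, 2*b, 2*c)"
    and "xt (2*a+2, 2*b+2, 2*c+2) = (2 * xt (2*a+2, 2*b, 2*c) * xt (2*a, 2*b+2, 2*c) * xt (2*a, 2*b, 2*c+2)
           + xt (2*a, 2*b, 2*c) * (xt (2*a+2, 2*b, 2*c) * xt (2*a, 2*b+2, 2*c+2)
               + xt (2*a, 2*b+2, 2*c) * xt (2*a+2, 2*b, 2*c+2) + xt (2*a, 2*b, 2*c+2) * xt (2*a+2, 2*b+2, 2*c))
           + 2 * (xt (2*a, 2*b+1, 2*c+1) * xt (2*a+1, 2*b, 2*c+1) * xt (2*a+1, 2*b+1, 2*c)))
           / (xt (2*a, 2*b, 2*c))^2"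
proof -
  note hex = assms[unfolded K_hexahedron_def]
  show "xt (2*a, 2*b, 2*c) \<noteq> 0"
    using hex[THEN conjunct1, rule_format, of "(a,b,c)"] by (simp add: dbl_def)
  show "xt (2*a, 2*b+1, 2*c+1)^2
          = xt (2*a, 2*b, 2*c) * xt (2*a, 2*b+2, 2*c+2) + xt (2*a, 2*b+2, 2*c) * xt (2*a, 2*b, 2*c+2)"
    using hex[THEN conjunct2, THEN conjunct1, rule_format, of "2*a" "2*b+1" "2*c+1"]
    by (simp add: add.assoc)
  show "xt (2*a+1, 2*b, 2*c+1)^2
          = xt (2*a, 2*b, 2*c) * xt (2*a+2, 2*b, 2*c+2) + xt (2*a+2, 2*b, 2*c) * xt (2*a, 2*b, 2*c+2)"
    using hex[THEN conjunct2, THEN conjunct2, THEN conjunct1, rule_format, of "2*a+1" "2*b" "2*c+1"]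
    by (simp add: add.assoc)
  show "xt (2*a+1, 2*b+1, 2*c)^2
          = xt (2*a, 2*b, 2*c) * xt (2*a+2, 2*b+2, 2*c) + xt (2*a+2, 2*b, 2*c) * xt (2*a, 2*b+2, 2*c)"
    using hex[THEN conjunct2, THEN conjunct2, THEN conjunct2, THEN conjunct1, rule_format,
        of "2*a+1" "2*b+1" "2*c"]
    by (simp add: add.assoc)
  show "xt (2*a+2, 2*b+1, 2*c+1) = (xt (2*a+1, 2*b, 2*c+1) * xt (2*a+1, 2*b+1, 2*c)
          + xt (2*a, 2*b+1, 2*c+1) * xt (2*a+2, 2*b, 2*c)) / xt (2*a, 2*b, 2*c)"
    and "xt (2*a+1, 2*b+2, 2*c+1) = (xt (2*a, 2*b+1, 2*c+1) * xt (2*a+1, 2*b+1, 2*c)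
          + xt (2*a+1, 2*b, 2*c+1) * xt (2*a, 2*b+2, 2*c)) / xt (2*a, 2*b, 2*c)"
    and "xt (2*a+1, 2*b+1, 2*c+2) = (xt (2*a, 2*b+1, 2*c+1) * xt (2*a+1, 2*b, 2*c+1)
          + xt (2*a+1, 2*b+1, 2*c) * xt (2*a, 2*b, 2*c+2)) / xt (2*a, 2*b, 2*c)"
    and "xt (2*a+2, 2*b+2, 2*c+2) = (2 * xt (2*a+2, 2*b, 2*c) * xt (2*a, 2*b+2, 2*c) * xt (2*a, 2*b, 2*c+2)
          + xt (2*a, 2*b, 2*c) * (xt (2*a+2, 2*b, 2*c) * xt (2*a, 2*b+2, 2*c+2)
              + xt (2*a, 2*b+2, 2*c) * xt (2*a+2, 2*b, 2*c+2) + xt (2*a, 2*b, 2*c+2) * xt (2*a+2, 2*b+2, 2*c))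
          + 2 * (xt (2*a, 2*b+1, 2*c+1) * xt (2*a+1, 2*b, 2*c+1) * xt (2*a+1, 2*b+1, 2*c)))
          / (xt (2*a, 2*b, 2*c))^2"
    using hex[THEN conjunct2, THEN conjunct2, THEN conjunct2, THEN conjunct2, rule_format, of "(a,b,c)"]
    by (simp_all add: Let_def dbl_def shift_def mult.assoc)
qed

lemma K_hexahedron_hexahedral_faces:
  assumes hex: "K_hexahedron xt"
    and X: "\<And>a b c. X(a,b,c) = xt (2*a, 2*b+1, 2*c+1)"
    and Y: "\<And>a b c. Y(a,b,c) = xt (2*a+1, 2*b, 2*c+1)"
    and Z: "\<And>a b c. Z(a,b,c) = xt (2*a+1, 2*b+1, 2*c)"
  shows "hexahedral_faces (\<lambda>v. xt (dbl v)) X Y Z"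
proof (rule hexahedral_facesI)
  fix a b c :: int
  note nz = K_hexahedronD(1)[OF hex, of a b c]
  show "X(a,b,c) ^ 2 = face_x (\<lambda>v. xt (dbl v)) (a,b,c)"
    using K_hexahedronD(2)[OF hex] by (simp add: X dbl_def algebra_simps)
  show "Y(a,b,c) ^ 2 = face_y (\<lambda>v. xt (dbl v)) (a,b,c)"
    using K_hexahedronD(3)[OF hex] by (simp add: Y dbl_def algebra_simps)
  show "Z(a,b,c) ^ 2 = face_z (\<lambda>v. xt (dbl v)) (a,b,c)"
    using K_hexahedronD(4)[OF hex] by (simp add: Z dbl_def algebra_simps)
  show "X(a,b,c) * Y(a,b,c) * Z(a,b,c) = kvert_min (\<lambda>v. xt (dbl v)) (a,b,c)"
    using kvert_poly_eq_iff[OF nz, THEN iffD1, OF K_hexahedronD(8)[OF hex]]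
    by (simp add: X Y Z dbl_def algebra_simps)
  show "X(a+1,b,c) * xt (dbl (a,b,c)) = Y(a,b,c) * Z(a,b,c) + X(a,b,c) * xt (dbl (a+1,b,c))"
    using K_hexahedronD(5)[OF hex, of a b c] nz by (simp add: X Y Z dbl_def field_simps)
  show "Y(a,b+1,c) * xt (dbl (a,b,c)) = X(a,b,c) * Z(a,b,c) + Y(a,b,c) * xt (dbl (a,b+1,c))"
    using K_hexahedronD(6)[OF hex, of a b c] nz by (simp add: X Y Z dbl_def field_simps)
  show "Z(a,b,c+1) * xt (dbl (a,b,c)) = X(a,b,c) * Y(a,b,c) + Z(a,b,c) * xt (dbl (a,b,c+1))"
    using K_hexahedronD(7)[OF hex, of a b c] nz by (simp add: X Y Z dbl_def field_simps)
qed

lemma K_hexahedron_restriction_coherent: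
  assumes "K_hexahedron xt"
  shows "coherent (\<lambda>v. xt (dbl v))"
proof (rule hexahedral_faces_coherent)
  show "xt (dbl v) \<noteq> 0" for v using assms unfolding K_hexahedron_def by blast
  show "hexahedral_faces (\<lambda>v. xt (dbl v)) (\<lambda>(a,b,c). xt (2*a, 2*b+1, 2*c+1))
          (\<lambda>(a,b,c). xt (2*a+1, 2*b, 2*c+1)) (\<lambda>(a,b,c). xt (2*a+1, 2*b+1, 2*c))"
    by (rule K_hexahedron_hexahedral_faces) (simp_all add: assms)
qed

(* Points outside L get the junk value 0; K_hexahedron never reads them. *)
definition hexahedron_array ::
  "(pt \<Rightarrow> complex) \<Rightarrow> (pt \<Rightarrow> complex) \<Rightarrow> (pt \<Rightarrow> complex) \<Rightarrow> (pt \<Rightarrow> complex) \<Rightarrow> pt \<Rightarrow> complex" where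
  "hexahedron_array x X Y Z = (\<lambda>(p,q,r).
     if even p \<and> even q \<and> even r then x (p div 2, q div 2, r div 2)
     else if even p \<and> odd q \<and> odd r then X (p div 2, q div 2, r div 2)
     else if odd p \<and> even q \<and> odd r then Y (p div 2, q div 2, r div 2)
     else if odd p \<and> odd q \<and> even r then Z (p div 2, q div 2, r div 2)
     else 0)"

lemma hexahedron_array_dbl [simp]: "hexahedron_array x X Y Z (dbl v) = x v"
  by (cases v) (simp add: hexahedron_array_def dbl_def)

lemma hexahedral_faces_K_hexahedron:
  assumes nz: "\<And>v. x v \<noteq> 0" and faces: "hexahedral_faces x X Y Z"
  shows "K_hexahedron (hexahedron_array x X Y Z)" (is "K_hexahedron ?xt")
  unfolding K_hexahedron_def
proof (intro conjI allI impI)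
  fix v show "?xt (dbl v) \<noteq> 0" using nz by simp
next
  fix a b c :: int assume "even a \<and> odd b \<and> odd c"
  then obtain p q r where "a = 2*p" "b = 2*q+1" "c = 2*r+1" by (meson evenE oddE)
  then show "(?xt (a,b,c))^2 = ?xt (a,b-1,c-1) * ?xt (a,b+1,c+1) + ?xt (a,b+1,c-1) * ?xt (a,b-1,c+1)"
    using hexahedral_facesD(1)[OF faces, of "(p,q,r)"]
    by (simp add: hexahedron_array_def add.commute)
next
  fix a b c :: int assume "odd a \<and> even b \<and> odd c"
  then obtain p q r where "a = 2*p+1" "b = 2*q" "c = 2*r+1" by (meson evenE oddE)
  then show "(?xt (a,b,c))^2 = ?xt (a-1,b,c-1) * ?xt (a+1,b,c+1) + ?xt (a+1,b,c-1) * ?xt (a-1,b,c+1)"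
    using hexahedral_facesD(2)[OF faces, of "(p,q,r)"]
    by (simp add: hexahedron_array_def add.commute)
next
  fix a b c :: int assume "odd a \<and> odd b \<and> even c"
  then obtain p q r where "a = 2*p+1" "b = 2*q+1" "c = 2*r" by (meson evenE oddE)
  then show "(?xt (a,b,c))^2 = ?xt (a-1,b-1,c) * ?xt (a+1,b+1,c) + ?xt (a+1,b-1,c) * ?xt (a-1,b+1,c)"
    using hexahedral_facesD(3)[OF faces, of "(p,q,r)"]
    by (simp add: hexahedron_array_def add.commute)
next
  fix v :: pt
  obtain a b c where v: "v = (a,b,c)" by (cases v)
  have nz0: "x(a,b,c) \<noteq> 0" by (rule nz)
  have "X(a+1,b,c) = (Y(a,b,c) * Z(a,b,c) + X(a,b,c) * x(a+1,b,c)) / x(a,b,c)"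
    and "Y(a,b+1,c) = (X(a,b,c) * Z(a,b,c) + Y(a,b,c) * x(a,b+1,c)) / x(a,b,c)"
    and "Z(a,b,c+1) = (X(a,b,c) * Y(a,b,c) + Z(a,b,c) * x(a,b,c+1)) / x(a,b,c)"
    using hexahedral_facesD(5-7)[OF faces, of a b c] nz0 by (simp_all add: field_simps)
  moreover have "x(a+1,b+1,c+1) = (2 * x(a+1,b,c) * x(a,b+1,c) * x(a,b,c+1)
       + x(a,b,c) * (x(a+1,b,c) * x(a,b+1,c+1) + x(a,b+1,c) * x(a+1,b,c+1) + x(a,b,c+1) * x(a+1,b+1,c))
       + 2 * (X(a,b,c) * Y(a,b,c) * Z(a,b,c))) / x(a,b,c)^2"
    using kvert_poly_eq_iff[OF nz0] hexahedral_facesD(4)[OF faces, of "(a,b,c)"] by simp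
  ultimately show "let z = (\<lambda>p q r. ?xt (shift (dbl v) (p,q,r)));
              A = 2 * z 2 0 0 * z 0 2 0 * z 0 0 2
                  + z 0 0 0 * (z 2 0 0 * z 0 2 2 + z 0 2 0 * z 2 0 2 + z 0 0 2 * z 2 2 0)
          in z 2 1 1 = (z 1 0 1 * z 1 1 0 + z 0 1 1 * z 2 0 0) / z 0 0 0 \<and>
             z 1 2 1 = (z 0 1 1 * z 1 1 0 + z 1 0 1 * z 0 2 0) / z 0 0 0 \<and>
             z 1 1 2 = (z 0 1 1 * z 1 0 1 + z 1 1 0 * z 0 0 2) / z 0 0 0 \<and>
             z 2 2 2 = (A + 2 * z 0 1 1 * z 1 0 1 * z 1 1 0) / (z 0 0 0)^2"
    by (simp add: v Let_def shift_def dbl_def hexahedron_array_def algebra_simps)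
qed

section \<open>Choosing consistent square roots\<close>

(* For n < 0 this is the product over {n..<0}; when every u i is a sign it is also the inverse of
   that product, which makes cumprod_succ hold for all n. *)
definition cumprod :: "(int \<Rightarrow> 'a::comm_ring_1) \<Rightarrow> int \<Rightarrow> 'a" where
  "cumprod u n = (if 0 \<le> n then \<Prod>i\<in>{0..<n}. u i else \<Prod>i\<in>{n..<0}. u i)"

lemma cumprod_square:
  assumes "\<And>i. u i ^ 2 = 1"
  shows "cumprod u n ^ 2 = 1"
  using assms by (simp add: cumprod_def power2_eq_square prod.distrib[symmetric])

lemma cumprod_succ:
  assumes u: "\<And>i. u i ^ 2 = 1"
  shows "cumprod u (n+1) = cumprod u n * u n"
proof (cases "0 \<le> n")
  case True
  then have "{0..<n+1} = insert n {0..<n}" by auto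
  then show ?thesis using True by (simp add: cumprod_def mult.commute)
next
  case False
  then have "{n..<0} = insert n {n+1..<0}" by auto
  then have "cumprod u n = u n * cumprod u (n+1)"
    using False by (cases "n = -1") (simp_all add: cumprod_def)
  then have "cumprod u n * u n = (u n * u n) * cumprod u (n+1)" by (simp add: mult_ac)
  then show ?thesis using u[of n] by (simp add: power2_eq_square)
qed

lemma sign_grid_factor:
  fixes q :: "int \<Rightarrow> int \<Rightarrow> 'a::comm_ring_1"
  assumes sq: "\<And>a b. q a b ^ 2 = 1"
    and block: "\<And>a b. q a b * q (a+1) b * q a (b+1) * q (a+1) (b+1) = 1"
  shows "q a b = q a 0 * q 0 b * q 0 0"
proof -
  have sq': "q a b * q a b = 1" for a b using sq[of a b] by (simp add: power2_eq_square)
  define column_step where "column_step a b = q a b * q a (b+1)" for a b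
  have column_step_succ: "column_step (a+1) b = column_step a b" for a b
  proof -
    have inv: "column_step a b * column_step (a+1) b = 1"
      unfolding column_step_def using block[of a b] by (simp add: algebra_simps)
    have "column_step a b * column_step a b = (q a b * q a b) * (q a (b+1) * q a (b+1))"
      by (simp add: column_step_def mult_ac)
    then have "column_step a b * column_step a b = 1" by (simp add: sq')
    then have "column_step (a+1) b = column_step a b * (column_step a b * column_step (a+1) b)"
      by (simp add: mult.assoc[symmetric])
    then show ?thesis using inv by simp
  qed
  have column_step_const: "column_step a b = column_step 0 b" for a b
  proof (induct a rule: int_induct[where k=0])
    case (step2 i)
    then show ?case using column_step_succ[of "i-1" b] by simp
  qed (simp_all add: column_step_succ)
  have "q a b * q a 0 = q 0 b * q 0 0" for b
  proof (induct b rule: int_induct[where k=0])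
    case base then show ?case by (simp add: sq')
  next
    case (step1 i)
    have "column_step a' i * (q a' i * q a' 0) = (q a' i * q a' i) * (q a' (i+1) * q a' 0)" for a'
      unfolding column_step_def by (simp add: mult_ac)
    then have "q a' (i+1) * q a' 0 = column_step a' i * (q a' i * q a' 0)" for a'
      by (simp add: sq')
    then show ?case using step1 column_step_const[of a i] by simp
  next
    case (step2 i)
    have "column_step a' (i-1) * (q a' i * q a' 0) = (q a' i * q a' i) * (q a' (i-1) * q a' 0)" for a'
      unfolding column_step_def by (simp add: mult_ac)
    then have "q a' (i-1) * q a' 0 = column_step a' (i-1) * (q a' i * q a' 0)" for a'
      by (simp add: sq')
    then show ?case using step2 column_step_const[of a "i-1"] by simp
  qed
  note row_const = this
  have "q a b = (q a 0 * q a 0) * q a b" by (simp add: sq')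
  also have "\<dots> = (q a b * q a 0) * q a 0" by (simp add: mult_ac)
  also have "\<dots> = q 0 b * q 0 0 * q a 0" by (simp add: row_const)
  finally show ?thesis by (simp add: mult_ac)
qed

locale nondegenerate_kashaev =
  fixes x :: "pt \<Rightarrow> complex"
  assumes nonzero: "x v \<noteq> 0"
    and coherent: "coherent x"
    and face_x_nonzero: "face_x x v \<noteq> 0"
    and face_y_nonzero: "face_y x v \<noteq> 0"
    and face_z_nonzero: "face_z x v \<noteq> 0"
begin

lemma kvert_min_square: "kvert_min x (a,b,c)^2 = face_x x (a,b,c) * face_y x (a,b,c) * face_z x (a,b,c)"
  using coherent Kcube_eq_0_iff[of x a b c] nonzero[of "(a,b,c)"] unfolding coherent_def by blast

(* x_link = f1 g1 for any face values f1, f2, f3 of the cube with f1 f2 f3 = K_v, where g1 is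
   given by the x-recurrence (cube_from_two_faces); so it does not depend on the square roots. *)
definition x_link :: "int \<Rightarrow> int \<Rightarrow> int \<Rightarrow> complex" where
  "x_link a b c = (kvert_min x (a,b,c) + face_x x (a,b,c) * x(a+1,b,c)) / x(a,b,c)"

definition y_link :: "int \<Rightarrow> int \<Rightarrow> int \<Rightarrow> complex" where
  "y_link a b c = (kvert_min x (a,b,c) + face_y x (a,b,c) * x(a,b+1,c)) / x(a,b,c)"

lemma cube_from_two_faces:
  assumes f1: "f1^2 = face_x x (a,b,c)" and f2: "f2^2 = face_y x (a,b,c)"
  defines "f3 \<equiv> kvert_min x (a,b,c) / (f1 * f2)"
  shows "f3^2 = face_z x (a,b,c)"
    and "f1 * f2 * f3 = kvert_min x (a,b,c)"
    and "((f2*f3 + f1*x(a+1,b,c)) / x(a,b,c))^2 = face_x x (a+1,b,c)"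
    and "((f1*f3 + f2*x(a,b+1,c)) / x(a,b,c))^2 = face_y x (a,b+1,c)"
    and "((f1*f2 + f3*x(a,b,c+1)) / x(a,b,c))^2 = face_z x (a,b,c+1)"
    and "x_link a b c = f1 * ((f2*f3 + f1*x(a+1,b,c)) / x(a,b,c))"
    and "y_link a b c = f2 * ((f1*f3 + f2*x(a,b+1,c)) / x(a,b,c))"
proof -
  have "f1 \<noteq> 0" "f2 \<noteq> 0" using f1 f2 face_x_nonzero face_y_nonzero by auto
  then show f3: "f3^2 = face_z x (a,b,c)" and prod: "f1 * f2 * f3 = kvert_min x (a,b,c)"
    using face_x_nonzero face_y_nonzero unfolding f3_def
    by (simp_all add: power_divide power_mult_distrib kvert_min_square f1 f2
        del: face_x.simps face_y.simps face_z.simps kvert_min.simps)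
  have nz: "x(a,b,c) \<noteq> 0" by (rule nonzero)
  have "((f2*f3 + f1*x(a+1,b,c)) / x(a,b,c)) * x(a,b,c) = f2*f3 + f1*x(a+1,b,c)"
    and "((f1*f3 + f2*x(a,b+1,c)) / x(a,b,c)) * x(a,b,c) = f1*f3 + f2*x(a,b+1,c)"
    and "((f1*f2 + f3*x(a,b,c+1)) / x(a,b,c)) * x(a,b,c) = f1*f2 + f3*x(a,b,c+1)"
    using nz by simp_all
  from cube_Kvert_values(9-11)[OF nz f1 f2 f3 prod this]
  show "((f2*f3 + f1*x(a+1,b,c)) / x(a,b,c))^2 = face_x x (a+1,b,c)"
    and "((f1*f3 + f2*x(a,b+1,c)) / x(a,b,c))^2 = face_y x (a,b+1,c)"
    and "((f1*f2 + f3*x(a,b,c+1)) / x(a,b,c))^2 = face_z x (a,b,c+1)"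
    by this
  show "x_link a b c = f1 * ((f2*f3 + f1*x(a+1,b,c)) / x(a,b,c))"
    and "y_link a b c = f2 * ((f1*f3 + f2*x(a,b+1,c)) / x(a,b,c))"
    unfolding x_link_def y_link_def prod[symmetric] f1[symmetric] f2[symmetric]
    by (simp_all add: algebra_simps power2_eq_square)
qed

lemma x_link_square: "x_link a b c ^ 2 = face_x x (a,b,c) * face_x x (a+1,b,c)"
proof -
  note cube = cube_from_two_faces[of "csqrt (face_x x (a,b,c))" a b c "csqrt (face_y x (a,b,c))"]
  show ?thesis unfolding cube(6)[OF power2_csqrt power2_csqrt] power_mult_distrib
    by (simp only: power2_csqrt cube(3)[OF power2_csqrt power2_csqrt])
qed

lemma y_link_square: "y_link a b c ^ 2 = face_y x (a,b,c) * face_y x (a,b+1,c)"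
proof -
  note cube = cube_from_two_faces[of "csqrt (face_x x (a,b,c))" a b c "csqrt (face_y x (a,b,c))"]
  show ?thesis unfolding cube(7)[OF power2_csqrt power2_csqrt] power_mult_distrib
    by (simp only: power2_csqrt cube(4)[OF power2_csqrt power2_csqrt])
qed

definition x_sign :: "int \<Rightarrow> int \<Rightarrow> int \<Rightarrow> complex" where
  "x_sign a b c = x_link a b c / (csqrt (face_x x (a,b,c)) * csqrt (face_x x (a+1,b,c)))"

definition y_sign :: "int \<Rightarrow> int \<Rightarrow> int \<Rightarrow> complex" where
  "y_sign a b c = y_link a b c / (csqrt (face_y x (a,b,c)) * csqrt (face_y x (a,b+1,c)))"

lemma x_sign_square: "x_sign a b c ^ 2 = 1"
  using face_x_nonzero unfolding x_sign_def power_divide power_mult_distrib x_link_square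
  by (simp del: face_x.simps)

lemma y_sign_square: "y_sign a b c ^ 2 = 1"
  using face_y_nonzero unfolding y_sign_def power_divide power_mult_distrib y_link_square
  by (simp del: face_y.simps)

(* Square roots along each x-line, with signs propagated so that consecutive values multiply to
   x_link: this is the x-recurrence. *)
definition X_trial :: "int \<Rightarrow> int \<Rightarrow> int \<Rightarrow> complex" where
  "X_trial a b c = cumprod (\<lambda>t. x_sign t b c) a * csqrt (face_x x (a,b,c))"

definition Y_trial :: "int \<Rightarrow> int \<Rightarrow> int \<Rightarrow> complex" where
  "Y_trial a b c = cumprod (\<lambda>t. y_sign a t c) b * csqrt (face_y x (a,b,c))"

lemma X_trial_square: "X_trial a b c ^ 2 = face_x x (a,b,c)"
  unfolding X_trial_def power_mult_distrib cumprod_square[OF x_sign_square] by simp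

lemma Y_trial_square: "Y_trial a b c ^ 2 = face_y x (a,b,c)"
  unfolding Y_trial_def power_mult_distrib cumprod_square[OF y_sign_square] by simp

lemma X_trial_link: "X_trial (a+1) b c * X_trial a b c = x_link a b c"
proof -
  let ?s = "cumprod (\<lambda>t. x_sign t b c) a"
  have "X_trial (a+1) b c * X_trial a b c
        = ?s^2 * (x_sign a b c * (csqrt (face_x x (a,b,c)) * csqrt (face_x x (a+1,b,c))))"
    unfolding X_trial_def cumprod_succ[OF x_sign_square] by (simp add: power2_eq_square mult_ac)
  also have "\<dots> = x_sign a b c * (csqrt (face_x x (a,b,c)) * csqrt (face_x x (a+1,b,c)))"
    unfolding cumprod_square[OF x_sign_square] by simp
  also have "\<dots> = x_link a b c"
    using face_x_nonzero[of "(a,b,c)"] face_x_nonzero[of "(a+1,b,c)"]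
    by (simp add: x_sign_def del: face_x.simps)
  finally show ?thesis .
qed

lemma Y_trial_link: "Y_trial a (b+1) c * Y_trial a b c = y_link a b c"
proof -
  let ?s = "cumprod (\<lambda>t. y_sign a t c) b"
  have "Y_trial a (b+1) c * Y_trial a b c
        = ?s^2 * (y_sign a b c * (csqrt (face_y x (a,b,c)) * csqrt (face_y x (a,b+1,c))))"
    unfolding Y_trial_def cumprod_succ[OF y_sign_square] by (simp add: power2_eq_square mult_ac)
  also have "\<dots> = y_sign a b c * (csqrt (face_y x (a,b,c)) * csqrt (face_y x (a,b+1,c)))"
    unfolding cumprod_square[OF y_sign_square] by simp
  also have "\<dots> = y_link a b c"
    using face_y_nonzero[of "(a,b,c)"] face_y_nonzero[of "(a,b+1,c)"]
    by (simp add: y_sign_def del: face_y.simps)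
  finally show ?thesis .
qed

definition Z_trial :: "int \<Rightarrow> int \<Rightarrow> int \<Rightarrow> complex" where
  "Z_trial a b c = kvert_min x (a,b,c) / (X_trial a b c * Y_trial a b c)"

definition Z_trial_up :: "int \<Rightarrow> int \<Rightarrow> int \<Rightarrow> complex" where
  "Z_trial_up a b c = (X_trial a b c * Y_trial a b c + Z_trial a b c * x(a,b,c+1)) / x(a,b,c)"

lemma trial_cube:
  shows "Z_trial a b c ^ 2 = face_z x (a,b,c)"
    and "X_trial a b c * Y_trial a b c * Z_trial a b c = kvert_min x (a,b,c)"
    and "X_trial (a+1) b c * x(a,b,c) = Y_trial a b c * Z_trial a b c + X_trial a b c * x(a+1,b,c)"
    and "Y_trial a (b+1) c * x(a,b,c) = X_trial a b c * Z_trial a b c + Y_trial a b c * x(a,b+1,c)"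
    and "Z_trial_up a b c ^ 2 = face_z x (a,b,c+1)"
    and "Z_trial_up a b c * x(a,b,c) = X_trial a b c * Y_trial a b c + Z_trial a b c * x(a,b,c+1)"
proof -
  note cube = cube_from_two_faces[OF X_trial_square Y_trial_square, of a b c, folded Z_trial_def]
  have nz: "x(a,b,c) \<noteq> 0" by (rule nonzero)
  have X_nz: "X_trial a b c \<noteq> 0" and Y_nz: "Y_trial a b c \<noteq> 0"
    using X_trial_square[of a b c] Y_trial_square[of a b c] face_x_nonzero face_y_nonzero by auto
  show "Z_trial a b c ^ 2 = face_z x (a,b,c)"
    and "X_trial a b c * Y_trial a b c * Z_trial a b c = kvert_min x (a,b,c)"
    and "Z_trial_up a b c ^ 2 = face_z x (a,b,c+1)"
    using cube(1,2,5) unfolding Z_trial_up_def by simp_all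
  show "Z_trial_up a b c * x(a,b,c) = X_trial a b c * Y_trial a b c + Z_trial a b c * x(a,b,c+1)"
    unfolding Z_trial_up_def using nz by simp
  have "X_trial a b c * X_trial (a+1) b c = X_trial a b c * ((Y_trial a b c * Z_trial a b c + X_trial a b c * x(a+1,b,c)) / x(a,b,c))"
    using X_trial_link[of a b c] cube(6) by (metis mult.commute)
  then have "X_trial (a+1) b c = (Y_trial a b c * Z_trial a b c + X_trial a b c * x(a+1,b,c)) / x(a,b,c)"
    by (simp only: mult_left_cancel[OF X_nz])
  then show "X_trial (a+1) b c * x(a,b,c) = Y_trial a b c * Z_trial a b c + X_trial a b c * x(a+1,b,c)"
    using nz by simp
  have "Y_trial a b c * Y_trial a (b+1) c = Y_trial a b c * ((X_trial a b c * Z_trial a b c + Y_trial a b c * x(a,b+1,c)) / x(a,b,c))"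
    using Y_trial_link[of a b c] cube(7) by (metis mult.commute)
  then have "Y_trial a (b+1) c = (X_trial a b c * Z_trial a b c + Y_trial a b c * x(a,b+1,c)) / x(a,b,c)"
    by (simp only: mult_left_cancel[OF Y_nz])
  then show "Y_trial a (b+1) c * x(a,b,c) = X_trial a b c * Z_trial a b c + Y_trial a b c * x(a,b+1,c)"
    using nz by simp
qed

definition z_sign :: "int \<Rightarrow> int \<Rightarrow> int \<Rightarrow> complex" where
  "z_sign a b c = Z_trial_up a b c / Z_trial a b (c+1)"

lemma Z_trial_nonzero: "Z_trial a b c \<noteq> 0"
  using trial_cube(1)[of a b c] face_z_nonzero by auto

lemma z_sign_square: "z_sign a b c ^ 2 = 1"
  using face_z_nonzero unfolding z_sign_def power_divide trial_cube(1,5) by (simp del: face_z.simps)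

lemma Z_trial_up_eq: "Z_trial_up a b c = z_sign a b c * Z_trial a b (c+1)"
  unfolding z_sign_def using Z_trial_nonzero by simp

(* Coherence at the common vertex (a+1,b+1,c+1) of the four cubes. *)
lemma z_sign_block: "z_sign a b c * z_sign (a+1) b c * z_sign a (b+1) c * z_sign (a+1) (b+1) c = 1"
proof -
  let ?X = "\<lambda>(a,b,c). X_trial a b c" and ?Y = "\<lambda>(a,b,c). Y_trial a b c"
    and ?Z = "\<lambda>(a,b,c). Z_trial a b c" and ?Zup = "\<lambda>(a,b,c). Z_trial_up a b c"
  let ?faces = "(face_x x (a+1,b+1,c+1) * face_x x (a+1,b+1,c) * face_x x (a+1,b,c+1) * face_x x (a+1,b,c)) *
     (face_y x (a+1,b+1,c+1) * face_y x (a+1,b+1,c) * face_y x (a,b+1,c+1) * face_y x (a,b+1,c)) *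
     (face_z x (a+1,b+1,c+1) * face_z x (a+1,b,c+1) * face_z x (a,b+1,c+1) * face_z x (a,b,c+1))"
  have "?faces \<noteq> 0"
    using face_x_nonzero face_y_nonzero face_z_nonzero by (simp del: face_x.simps face_y.simps face_z.simps)
  moreover have "(\<Prod>\<sigma>\<in>signs. Kvert x (a+1,b+1,c+1) \<sigma>) = ?faces"
    using coherent face_product_around_vertex[of x "a+1" "b+1" "c+1"] unfolding coherent_def by simp
  moreover have "(\<Prod>\<sigma>\<in>signs. Kvert x (a+1,b+1,c+1) \<sigma>) =
      (z_sign a b c * z_sign (a+1) b c * z_sign a (b+1) c * z_sign (a+1) (b+1) c) * ?faces"
  proof -
    have squares: "?X v ^ 2 = face_x x v" "?Y v ^ 2 = face_y x v" "?Z v ^ 2 = face_z x v"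
      "?X v * ?Y v * ?Z v = kvert_min x v" for v
      by (simp_all add: X_trial_square Y_trial_square trial_cube split: prod.split)
    have recurrences: "?X(a+1,b,c) * x(a,b,c) = ?Y(a,b,c) * ?Z(a,b,c) + ?X(a,b,c) * x(a+1,b,c)"
      "?Y(a,b+1,c) * x(a,b,c) = ?X(a,b,c) * ?Z(a,b,c) + ?Y(a,b,c) * x(a,b+1,c)"
      "?Zup(a,b,c) * x(a,b,c) = ?X(a,b,c) * ?Y(a,b,c) + ?Z(a,b,c) * x(a,b,c+1)" for a b c
      by (simp_all add: trial_cube)
    note around = Kvert_product_around_vertex[OF nonzero squares recurrences, of "a+1" "b+1" "c+1"]
    show ?thesis
      unfolding X_trial_square[symmetric] Y_trial_square[symmetric] trial_cube(1)[symmetric]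
      using around by (simp add: Z_trial_up_eq power2_eq_square mult_ac)
  qed
  ultimately show ?thesis by simp
qed

lemma z_sign_factor: "z_sign a b c = z_sign a 0 c * z_sign 0 b c * z_sign 0 0 c"
  using sign_grid_factor[of "\<lambda>a b. z_sign a b c"] z_sign_square z_sign_block by blast

definition x_flip :: "int \<Rightarrow> int \<Rightarrow> complex" where
  "x_flip b c = cumprod (\<lambda>t. z_sign 0 b t * z_sign 0 0 t) c"

definition y_flip :: "int \<Rightarrow> int \<Rightarrow> complex" where
  "y_flip a c = cumprod (\<lambda>t. z_sign a 0 t) c"

lemma x_flip_square: "x_flip b c ^ 2 = 1"
  unfolding x_flip_def by (rule cumprod_square) (simp add: power_mult_distrib z_sign_square)

lemma y_flip_square: "y_flip a c ^ 2 = 1"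
  unfolding y_flip_def by (rule cumprod_square) (simp add: z_sign_square)

lemma x_flip_succ: "x_flip b (c+1) = x_flip b c * (z_sign 0 b c * z_sign 0 0 c)"
  unfolding x_flip_def by (rule cumprod_succ) (simp add: power_mult_distrib z_sign_square)

lemma y_flip_succ: "y_flip a (c+1) = y_flip a c * z_sign a 0 c"
  unfolding y_flip_def by (rule cumprod_succ) (simp add: z_sign_square)

(* The flips are constant along x- and y-lines, so every x- and y-recurrence is only multiplied by
   a sign, while by z_sign_factor they turn the z-recurrence, which held up to z_sign, into an
   exact one. *)
definition X_face :: "pt \<Rightarrow> complex" where
  "X_face = (\<lambda>(a,b,c). x_flip b c * X_trial a b c)"

definition Y_face :: "pt \<Rightarrow> complex" where
  "Y_face = (\<lambda>(a,b,c). y_flip a c * Y_trial a b c)"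

definition Z_face :: "pt \<Rightarrow> complex" where
  "Z_face = (\<lambda>(a,b,c). x_flip b c * y_flip a c * Z_trial a b c)"

lemma hexahedral_faces: "hexahedral_faces x X_face Y_face Z_face"
proof (rule hexahedral_facesI)
  fix a b c :: int
  have x_flip2: "x_flip b c * x_flip b c = 1" and y_flip2: "y_flip a c * y_flip a c = 1"
    using x_flip_square[of b c] y_flip_square[of a c] by (simp_all add: power2_eq_square)
  show "X_face(a,b,c) ^ 2 = face_x x (a,b,c)"
    by (simp add: X_face_def power_mult_distrib x_flip_square X_trial_square del: face_x.simps)
  show "Y_face(a,b,c) ^ 2 = face_y x (a,b,c)"
    by (simp add: Y_face_def power_mult_distrib y_flip_square Y_trial_square del: face_y.simps)
  show "Z_face(a,b,c) ^ 2 = face_z x (a,b,c)"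
    by (simp add: Z_face_def power_mult_distrib x_flip_square y_flip_square trial_cube(1) del: face_z.simps)
  have "X_face(a,b,c) * Y_face(a,b,c) * Z_face(a,b,c)
        = (x_flip b c * x_flip b c) * (y_flip a c * y_flip a c) * (X_trial a b c * Y_trial a b c * Z_trial a b c)"
    by (simp add: X_face_def Y_face_def Z_face_def mult_ac)
  then show "X_face(a,b,c) * Y_face(a,b,c) * Z_face(a,b,c) = kvert_min x (a,b,c)"
    by (simp add: x_flip2 y_flip2 trial_cube(2) del: kvert_min.simps)
  have "Y_face(a,b,c) * Z_face(a,b,c) + X_face(a,b,c) * x(a+1,b,c)
        = x_flip b c * ((y_flip a c * y_flip a c) * (Y_trial a b c * Z_trial a b c) + X_trial a b c * x(a+1,b,c))"
    by (simp add: X_face_def Y_face_def Z_face_def algebra_simps)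
  also have "\<dots> = X_face(a+1,b,c) * x(a,b,c)"
    by (simp add: y_flip2 X_face_def trial_cube(3))
  finally show "X_face(a+1,b,c) * x(a,b,c) = Y_face(a,b,c) * Z_face(a,b,c) + X_face(a,b,c) * x(a+1,b,c)" ..
  have "X_face(a,b,c) * Z_face(a,b,c) + Y_face(a,b,c) * x(a,b+1,c)
        = y_flip a c * ((x_flip b c * x_flip b c) * (X_trial a b c * Z_trial a b c) + Y_trial a b c * x(a,b+1,c))"
    by (simp add: X_face_def Y_face_def Z_face_def algebra_simps)
  also have "\<dots> = Y_face(a,b+1,c) * x(a,b,c)"
    by (simp add: x_flip2 Y_face_def trial_cube(4))
  finally show "Y_face(a,b+1,c) * x(a,b,c) = X_face(a,b,c) * Z_face(a,b,c) + Y_face(a,b,c) * x(a,b+1,c)" ..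
  have "Z_face(a,b,c+1) = x_flip b c * y_flip a c * (z_sign a b c * Z_trial a b (c+1))"
    by (simp add: Z_face_def x_flip_succ y_flip_succ z_sign_factor[of a b c] mult_ac)
  then have "Z_face(a,b,c+1) * x(a,b,c) = x_flip b c * y_flip a c * (Z_trial_up a b c * x(a,b,c))"
    by (simp add: Z_trial_up_eq)
  also have "\<dots> = X_face(a,b,c) * Y_face(a,b,c) + Z_face(a,b,c) * x(a,b,c+1)"
    by (simp add: trial_cube(6) X_face_def Y_face_def Z_face_def algebra_simps)
  finally show "Z_face(a,b,c+1) * x(a,b,c) = X_face(a,b,c) * Y_face(a,b,c) + Z_face(a,b,c) * x(a,b,c+1)" .
qed

end

lemma coherent_extends_to_K_hexahedron:
  assumes "\<And>v. x v \<noteq> 0" and "coherent x"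
    and "\<And>v. face_x x v \<noteq> 0" and "\<And>v. face_y x v \<noteq> 0" and "\<And>v. face_z x v \<noteq> 0"
  shows "\<exists>xt. (\<forall>v. xt (dbl v) = x v) \<and> K_hexahedron xt"
proof -
  interpret nondegenerate_kashaev x by standard (fact assms)+
  show ?thesis
    using hexahedral_faces_K_hexahedron[OF nonzero hexahedral_faces] hexahedron_array_dbl by blast
qed

theorem theorem2p22:
  shows "(\<forall>x :: pt \<Rightarrow> complex.
            (\<forall>v. x v \<noteq> 0) \<and> coherent x \<and>
            (\<forall>v i j. i \<in> {1,2,3} \<and> j \<in> {1,2,3} \<and> i \<noteq> j \<longrightarrow>
               x v * x (shift (shift v (e i)) (e j)) + x (shift v (e i)) * x (shift v (e j)) \<noteq> 0)
            \<longrightarrow> (\<exists>xt :: pt \<Rightarrow> complex. (\<forall>v. xt (dbl v) = x v) \<and> K_hexahedron xt))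
       \<and> (\<forall>xt :: pt \<Rightarrow> complex.
            (\<forall>v. xt (dbl v) \<noteq> 0) \<and> K_hexahedron xt \<longrightarrow> coherent (\<lambda>v. xt (dbl v)))"
proof (intro conjI allI impI)
  fix x :: "pt \<Rightarrow> complex"
  assume "(\<forall>v. x v \<noteq> 0) \<and> coherent x \<and>
            (\<forall>v i j. i \<in> {1,2,3} \<and> j \<in> {1,2,3} \<and> i \<noteq> j \<longrightarrow>
               x v * x (shift (shift v (e i)) (e j)) + x (shift v (e i)) * x (shift v (e j)) \<noteq> 0)"
  then show "\<exists>xt. (\<forall>v. xt (dbl v) = x v) \<and> K_hexahedron xt"
    by (intro coherent_extends_to_K_hexahedron) (auto simp: face_x_shift face_y_shift face_z_shift)
next
  fix xt :: "pt \<Rightarrow> complex"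
  assume "(\<forall>v. xt (dbl v) \<noteq> 0) \<and> K_hexahedron xt"
  then show "coherent (\<lambda>v. xt (dbl v))" by (blast intro: K_hexahedron_restriction_coherent)
qed

end
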